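(* For every $E>0$ there exist even, non-quadratic $V_1,V_2\in\mathcal{UM}$ with $\deg(V_1,0)=\deg(V_2,0)=2$ such that $a(\theta)=b_E(\theta)$ for every $\theta\in(0,E)$. Moreover, $V_1,V_2$ can be chosen so that in addition $\sqrt{V_2''(0)/V_1''(0)}$ is irrational.
   Context: $\mathcal{UM}$: real-analytic $V:\mathbb R\to\mathbb R_{\ge0}$ with $V(0)=0$, $yV'(y)>0$ for $y\neq0$, $V(y)\to\infty$ as $y\to\pm\infty$; $\deg(V,0)$ is the least $m$ with $V^{(m)}(0)\ne0$; $V^{-1}$ is the inverse of $V|_{[0,\infty)}$. $a(\theta)=\int_0^{V_1^{-1}(\theta)}\frac{dy}{\sqrt2\sqrt{\theta-V_1(y)}}$ for $\theta>0$ and $b_E(\theta)=\int_0^{V_2^{-1}(E-\theta)}\frac{dy}{\sqrt2\sqrt{E-\theta-V_2(y)}}$ for $0\le\theta<E$. *)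

theory Defs
  imports "HOL-Analysis.Analysis"
begin

definition real_analytic :: "(real \<Rightarrow> real) \<Rightarrow> bool" where
  "real_analytic V \<longleftrightarrow>
     (\<forall>x. \<exists>r>0. \<exists>c::nat \<Rightarrow> real. \<forall>y. \<bar>y - x\<bar> < r \<longrightarrow> (\<lambda>n. c n * (y - x) ^ n) sums V y)"

definition UM :: "(real \<Rightarrow> real) \<Rightarrow> bool" where
  "UM V \<longleftrightarrow> real_analytic V \<and> (\<forall>y. V y \<ge> 0) \<and> V 0 = 0 \<and>
     (\<forall>y. y \<noteq> 0 \<longrightarrow> y * deriv V y > 0) \<and>
     filterlim V at_top at_top \<and> filterlim V at_top at_bot"

definition deg0 :: "(real \<Rightarrow> real) \<Rightarrow> nat" where
  "deg0 V = (LEAST m. (deriv ^^ m) V 0 \<noteq> 0)"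

definition Vinv :: "(real \<Rightarrow> real) \<Rightarrow> real \<Rightarrow> real" where
  "Vinv V x = (THE y. y \<ge> 0 \<and> V y = x)"

definition a_fun :: "(real \<Rightarrow> real) \<Rightarrow> real \<Rightarrow> real" where
  "a_fun V1 \<theta> = (LINT y:{0..Vinv V1 \<theta>}|lborel. 1 / (sqrt 2 * sqrt (\<theta> - V1 y)))"

definition b_fun :: "(real \<Rightarrow> real) \<Rightarrow> real \<Rightarrow> real \<Rightarrow> real" where
  "b_fun V2 E \<theta> = (LINT y:{0..Vinv V2 (E - \<theta>)}|lborel. 1 / (sqrt 2 * sqrt (E - \<theta> - V2 y)))"

definition even_fun :: "(real \<Rightarrow> real) \<Rightarrow> bool" where
  "even_fun V \<longleftrightarrow> (\<forall>y. V (- y) = V y)"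

definition quadratic_fun :: "(real \<Rightarrow> real) \<Rightarrow> bool" where
  "quadratic_fun V \<longleftrightarrow> (\<exists>c. \<forall>y. V y = c * y ^ 2)"

end

theory Submission
  imports Defs "HOL-Complex_Analysis.Conformal_Mappings"
begin

(* Let P be an odd polynomial with P' > 0 and V = (P^-1)^2, so that V (P u) = u^2. The substitution
   y = P (sqrt theta sin t) turns a(theta) into (1/sqrt 2) \<integral>_0^(pi/2) P'(sqrt theta sin t) dt, a polynomial in theta;
   for P u = c1 u + c3 u^3 + c5 u^5 it is pi/(2 sqrt 2) (c1 + 3/2 c3 theta + 15/8 c5 theta^2). Since b_E(theta) = a(E - theta),
   the coefficients (alpha, 0, 8/15) for V1 and (alpha + E^2, -4E/3, 8/15) for V2 make both sides equal to
   pi/(2 sqrt 2) (alpha + theta^2). Analyticity of V comes from the holomorphic inverse function theorem,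
   and V''(0) = 2/c1^2, so the ratio in question is alpha/(alpha + E^2) = 2 - sqrt 2 for alpha = sqrt 2 E^2. *)

lemma has_integral_quartic_sin:
  fixes A B C :: real
  shows "((\<lambda>t. A + B * sin t ^ 2 + C * sin t ^ 4) has_integral (A*pi/2 + B*pi/4 + C*3*pi/16)) {0..pi/2}"
proof -
  define F where "F t = A*t + B*(t - sin t * cos t)/2 + C * (3 * t / 8 - 3 * sin t * cos t / 8 - sin t ^ 3 * cos t / 4)" for t
  have "((\<lambda>t. A + B * sin t ^ 2 + C * sin t ^ 4) has_integral (F (pi/2) - F 0)) {0..pi/2}"
  proof (rule fundamental_theorem_of_calculus)
    fix t :: real
    have d: "(F has_real_derivative (A + B*(1 - (cos t * cos t - sin t * sin t))/2 +
       C*(3/8 - 3*(cos t * cos t - sin t * sin t)/8 - (3 * sin t^2 * cos t * cos t - sin t^3 * sin t)/4))) (at t)"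
      unfolding F_def
      by (auto intro!: derivative_eq_intros simp: power2_eq_square power3_eq_cube) (simp add: field_simps; algebra)
    have pyth: "cos t * cos t + sin t * sin t = 1" by (rule sin_cos_squared_add3)
    have "A + B*(1 - (cos t * cos t - sin t * sin t))/2 +
       C*(3/8 - 3*(cos t * cos t - sin t * sin t)/8 - (3 * sin t^2 * cos t * cos t - sin t^3 * sin t)/4)
       = A + B * sin t ^ 2 + C * sin t ^ 4"
      apply (simp add: power2_eq_square power3_eq_cube power4_eq_xxxx field_simps)
      using pyth by algebra
    with d show "(F has_vector_derivative A + B * sin t ^ 2 + C * sin t ^ 4) (at t within {0..pi / 2})"
      unfolding has_real_derivative_iff_has_vector_derivative[symmetric]
      by (metis has_field_derivative_at_within)
  qed simp
  moreover have "F (pi/2) - F 0 = A*pi/2 + B*pi/4 + C*3*pi/16" unfolding F_def by (simp add: field_simps)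
  ultimately show ?thesis by simp
qed

lemma sqrt_2_irrational: "sqrt 2 \<notin> \<rat>"
proof
  assume "sqrt 2 \<in> \<rat>"
  then obtain m n :: nat where "n \<noteq> 0" "\<bar>sqrt 2\<bar> = real m / real n" and cop: "coprime m n"
    by (rule Rats_abs_nat_div_natE)
  then have "(sqrt 2 * real n)^2 = (real m)^2" by simp
  then have "real (2 * n^2) = real (m^2)" by (simp add: power_mult_distrib)
  then have eq: "2 * n^2 = m^2" by (simp only: of_nat_eq_iff)
  then have "even m" by (metis even_mult_iff even_numeral even_power)
  then obtain k where "m = 2 * k" by blast
  with eq have "n^2 = 2 * k^2" by (simp add: power_mult_distrib)
  then have "even n" by (metis even_mult_iff even_numeral even_power)
  with \<open>even m\<close> cop show False using coprime_common_divisor_nat[of m n 2] by simp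
qed

lemma two_minus_sqrt_2_irrational: "2 - sqrt 2 \<notin> \<rat>"
proof
  assume "2 - sqrt 2 \<in> \<rat>"
  from Rats_diff[OF Rats_number_of[of "num.Bit0 num.One"] this] show False
    using sqrt_2_irrational by simp
qed

lemma sqrt_2_scaled_ratio: "e > 0 \<Longrightarrow> sqrt 2 * e / (sqrt 2 * e + e) = 2 - sqrt 2"
proof -
  assume "e > 0"
  have "(2 - sqrt 2) * (sqrt 2 * e + e) = sqrt 2 * e + (2 - sqrt 2 * sqrt 2) * e"
    by (simp add: algebra_simps)
  then have "(2 - sqrt 2) * (sqrt 2 * e + e) = sqrt 2 * e" by simp
  moreover have "sqrt 2 * e + e > 0" using \<open>e > 0\<close> by (simp add: add_pos_pos)
  ultimately show ?thesis by (subst divide_eq_eq) auto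
qed

lemma sqrt_quotient_inverse_squares:
  fixes a b :: real
  assumes "a > 0" "b > 0"
  shows "sqrt ((2 / b^2) / (2 / a^2)) = a / b"
proof -
  have "(2 / b^2) / (2 / a^2) = (a / b)^2" by (simp add: power_divide)
  then show ?thesis using assms by simp
qed

lemma b_fun_eq_a_fun: "b_fun V E \<theta> = a_fun V (E - \<theta>)"
  unfolding a_fun_def b_fun_def ..

lemma real_analyticI_holomorphic_extension:
  fixes f :: "real \<Rightarrow> real"
  assumes "\<And>x. \<exists>d>0. \<exists>H. H holomorphic_on ball (complex_of_real x) d \<and>
                          (\<forall>y. \<bar>y - x\<bar> < d \<longrightarrow> H (of_real y) = of_real (f y))"
  shows "real_analytic f"
  unfolding real_analytic_def
proof
  fix x
  obtain d H where "d > 0" and holo: "H holomorphic_on ball (complex_of_real x) d"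
    and ext: "\<And>y. \<bar>y - x\<bar> < d \<Longrightarrow> H (of_real y) = of_real (f y)"
    using assms by blast
  define c where "c n = Re ((deriv ^^ n) H (of_real x) / fact n)" for n
  have "(\<lambda>n. c n * (y - x) ^ n) sums f y" if y: "\<bar>y - x\<bar> < d" for y
  proof -
    have "complex_of_real y \<in> ball (of_real x) d" using y by (simp add: dist_norm flip: of_real_diff)
    from holomorphic_power_series[OF holo this]
    have "(\<lambda>n. Re ((deriv ^^ n) H (of_real x) / fact n * (of_real y - of_real x)^n)) sums Re (H (of_real y))"
      by (subst (asm) sums_complex_iff) (rule conjunct1)
    moreover have "Re ((deriv ^^ n) H (of_real x) / fact n * (of_real y - of_real x)^n) = c n * (y - x)^n" for n
    proof -
      have "(complex_of_real y - of_real x)^n = of_real ((y - x)^n)" by simp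
      moreover have "\<And>a t. Re (a * complex_of_real t) = Re a * t" by simp
      ultimately show ?thesis unfolding c_def by (simp only:)
    qed
    ultimately show ?thesis using ext[OF y] by simp
  qed
  with \<open>d > 0\<close> show "\<exists>r>0. \<exists>c. \<forall>y. \<bar>y - x\<bar> < r \<longrightarrow> (\<lambda>n. c n * (y - x) ^ n) sums f y" by blast
qed

locale odd_quintic =
  fixes c1 c3 c5 :: real
  assumes derivative_bounded_below: "\<exists>m>0. \<forall>u. m \<le> c1 + 3*c3*u^2 + 5*c5*u^4"
begin

definition P :: "real \<Rightarrow> real" where "P u = c1*u + c3*u^3 + c5*u^5"
definition P' :: "real \<Rightarrow> real" where "P' u = c1 + 3*c3*u^2 + 5*c5*u^4"
definition P'' :: "real \<Rightarrow> real" where "P'' u = 6*c3*u + 20*c5*u^3"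
definition V :: "real \<Rightarrow> real" where "V y = (inv P y)^2"

lemma P'_pos: "P' u > 0"
proof -
  obtain m where "m > 0" "\<And>u. m \<le> P' u"
    using derivative_bounded_below unfolding P'_def by blast
  then show ?thesis by (meson less_le_trans)
qed

lemma has_real_derivative_P: "(P has_real_derivative P' u) (at u)"
  unfolding P_def P'_def by (auto intro!: derivative_eq_intros simp: algebra_simps)

lemma has_real_derivative_P': "(P' has_real_derivative P'' u) (at u)"
  unfolding P'_def P''_def by (auto intro!: derivative_eq_intros simp: algebra_simps)

lemma P_0: "P 0 = 0" unfolding P_def by simp

lemma P_odd: "P (-u) = - P u" unfolding P_def by (simp add: power_minus_odd)

lemma strict_mono_P: "strict_mono P"
proof (rule strict_monoI)
  show "P x < P y" if "x < y" for x y
    using that has_real_derivative_P P'_pos by (blast intro: DERIV_pos_imp_increasing)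
qed

lemma surj_P: "surj P"
proof -
  obtain m where m: "m > 0" "\<And>u. m \<le> P' u"
    using derivative_bounded_below unfolding P'_def by blast
  have linear_lower_bound: "m * u \<le> P u" if "u \<ge> 0" for u
  proof -
    have "P 0 - m * 0 \<le> P u - m * u"
      by (rule DERIV_nonneg_imp_nondecreasing[OF that])
        (use m in \<open>auto intro!: exI derivative_eq_intros has_real_derivative_P\<close>)
    then show ?thesis by (simp add: P_0)
  qed
  have nonneg: "y \<in> range P" if "y \<ge> 0" for y
  proof -
    have "y \<le> P (y/m)" using linear_lower_bound[of "y/m"] that m by simp
    then show ?thesis
      using IVT[of P 0 y "y/m"] that m has_real_derivative_P[THEN DERIV_isCont] P_0 by force
  qed
  have "y \<in> range P" for y
  proof (cases "y \<ge> 0")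
    case False
    then obtain u where "P u = - y" using nonneg[of "-y"] by auto
    then show ?thesis by (metis P_odd minus_minus rangeI)
  qed (use nonneg in simp)
  then show ?thesis by blast
qed

lemma P_inv_P: "P (inv P y) = y"
  using surj_P by (rule surj_f_inv_f)

lemma inv_P_P: "inv P (P u) = u"
  using strict_mono_on_imp_inj_on[OF strict_mono_P] by (rule inv_f_f)

lemma strict_mono_inv_P: "strict_mono (inv P)"
  using strict_mono_P surj_P inv_P_P by (rule strict_mono_inv)

lemma inv_P_0: "inv P 0 = 0"
  using inv_P_P[of 0] by (simp add: P_0)

lemma inv_P_odd: "inv P (-y) = - inv P y"
  using inv_P_P[of "- inv P y"] by (simp add: P_odd P_inv_P)

lemma has_real_derivative_inv_P: "(inv P has_real_derivative inverse (P' (inv P y))) (at y)"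
proof (rule has_field_derivative_inverse_strong_x[where S=UNIV and f=P])
  show "continuous_on UNIV P"
    using has_real_derivative_P by (meson DERIV_isCont continuous_at_imp_continuous_on)
  show "P' (inv P y) \<noteq> 0" using P'_pos by (metis less_irrefl)
qed (auto simp: has_real_derivative_P P_inv_P inv_P_P)

lemma V_P: "V (P u) = u^2"
  unfolding V_def inv_P_P ..

lemma V_even: "V (-y) = V y"
  unfolding V_def by (simp add: inv_P_odd)

lemma has_real_derivative_V: "(V has_real_derivative 2 * inv P y / P' (inv P y)) (at y)"
  unfolding V_def using has_real_derivative_inv_P[of y]
  by (auto intro!: derivative_eq_intros simp: field_simps)

lemma deriv_V: "deriv V = (\<lambda>y. 2 * inv P y / P' (inv P y))"
  using has_real_derivative_V DERIV_imp_deriv by blast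

lemma deriv_V_sign: "y \<noteq> 0 \<Longrightarrow> y * deriv V y > 0"
proof -
  assume "y \<noteq> 0"
  have "y * inv P y > 0"
  proof (cases "y > 0")
    case True
    then have "inv P y > 0" using strict_monoD[OF strict_mono_inv_P, of 0 y] by (simp add: inv_P_0)
    with True show ?thesis by simp
  next
    case False
    with \<open>y \<noteq> 0\<close> have "y < 0" by simp
    then have "inv P y < 0" using strict_monoD[OF strict_mono_inv_P, of y 0] by (simp add: inv_P_0)
    with \<open>y < 0\<close> show ?thesis by (simp add: mult_neg_neg)
  qed
  then show ?thesis
    unfolding deriv_V using P'_pos[of "inv P y"] by (simp add: zero_less_mult_iff zero_less_divide_iff)
qed

lemma V_at_top: "filterlim V at_top at_top"
proof -
  have "filterlim (inv P) at_top at_top"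
    unfolding filterlim_at_top eventually_at_top_linorder
    by (metis inv_P_P strict_mono_inv_P strict_mono_leD)
  then show ?thesis
    unfolding V_def by (rule filterlim_pow_at_top[rotated]) simp
qed

lemma V_at_bot: "filterlim V at_top at_bot"
  unfolding filterlim_at_bot_mirror V_even by (rule V_at_top)

lemma deriv2_V_0: "(deriv ^^ 2) V 0 = 2 / c1^2"
proof -
  have "((\<lambda>y. 2 * inv P y / P' (inv P y)) has_real_derivative 2 / (P' 0)^2) (at 0)"
    using has_real_derivative_inv_P[of 0] P'_pos[of 0] DERIV_chain2[OF has_real_derivative_P' has_real_derivative_inv_P]
    by (auto intro!: derivative_eq_intros simp: inv_P_0 power2_eq_square field_simps)
  then have "deriv (deriv V) 0 = 2 / (P' 0)^2" unfolding deriv_V by (rule DERIV_imp_deriv)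
  then show ?thesis by (simp add: P'_def numeral_2_eq_2)
qed

lemma deg0_V: "deg0 V = 2"
  unfolding deg0_def
proof (rule Least_equality)
  show "(deriv ^^ 2) V 0 \<noteq> 0" using deriv2_V_0 P'_pos[of 0] by (simp add: P'_def)
  fix k assume "(deriv ^^ k) V 0 \<noteq> 0"
  moreover have "(deriv ^^ 0) V 0 = 0" by (simp add: V_def inv_P_0)
  moreover have "(deriv ^^ 1) V 0 = 0" by (simp add: deriv_V inv_P_0)
  ultimately show "2 \<le> k" by (cases k; cases "k - 1"; auto)
qed

lemma not_quadratic_V:
  assumes "c3 \<noteq> 0 \<or> c5 \<noteq> 0"
  shows "\<not> quadratic_fun V"
proof
  assume "quadratic_fun V"
  then obtain c where c: "\<And>y. V y = c * y^2" unfolding quadratic_fun_def by blast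
  have sq: "u^2 = c * (P u)^2" for u using c[of "P u"] by (simp add: V_P)
  have pos: "P u > 0" if "u > 0" for u
    using strict_mono_P[THEN strict_monoD, OF that] by (simp add: P_0)
  have "k * P 1 = P k" if "k > 0" for k :: real
  proof -
    have "(k * P 1)^2 = (P k)^2" using sq[of 1] sq[of k] by (simp add: power_mult_distrib)
    moreover have "k * P 1 \<ge> 0" "P k \<ge> 0" using that pos[of 1] pos[of k] by simp_all
    ultimately show ?thesis by (simp add: power2_eq_iff_nonneg)
  qed
  from this[of 2] this[of 3] have "6*c3 + 30*c5 = 0" "24*c3 + 240*c5 = 0"
    unfolding P_def by simp_all
  then show False using assms by linarith
qed

lemma inv_P_holomorphic_extension:
  "\<exists>d>0. \<exists>G. G holomorphic_on ball (complex_of_real x) d \<and>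
     (\<forall>y. \<bar>y - x\<bar> < d \<longrightarrow> G (of_real y) = of_real (inv P y))"
proof -
  define Pc :: "complex \<Rightarrow> complex" where "Pc z = of_real c1 * z + of_real c3 * z^3 + of_real c5 * z^5" for z
  have Pc_real: "Pc (of_real u) = of_real (P u)" for u unfolding Pc_def P_def by simp
  have Pc_hol: "Pc holomorphic_on S" for S unfolding Pc_def by (intro holomorphic_intros)
  define \<xi> where "\<xi> = complex_of_real (inv P x)"
  have "(Pc has_field_derivative of_real (P' (inv P x))) (at \<xi>)"
    unfolding Pc_def P'_def \<xi>_def by (auto intro!: derivative_eq_intros simp: algebra_simps)
  then have "deriv Pc \<xi> = of_real (P' (inv P x))" by (rule DERIV_imp_deriv)
  then have "deriv Pc \<xi> \<noteq> 0" using P'_pos[of "inv P x"] by simp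
  then obtain r where r: "r > 0" "inj_on Pc (ball \<xi> r)"
    using has_complex_derivative_locally_injective[OF Pc_hol[of UNIV]] by auto
  obtain G where G: "G holomorphic_on (Pc ` ball \<xi> r)" "\<And>z. z \<in> ball \<xi> r \<Longrightarrow> G (Pc z) = z"
    using holomorphic_has_inverse[OF Pc_hol open_ball r(2)] by metis
  have "complex_of_real x = Pc \<xi>" by (simp add: \<xi>_def Pc_real P_inv_P)
  then have "complex_of_real x \<in> Pc ` ball \<xi> r"
    using r(1) by (simp add: image_eqI)
  then obtain \<rho> where \<rho>: "\<rho> > 0" "ball (complex_of_real x) \<rho> \<subseteq> Pc ` ball \<xi> r"
    using open_mapping_thm3[OF Pc_hol open_ball r(2)] openE by blast
  obtain \<delta> where \<delta>: "\<delta> > 0" "\<And>y. dist y x < \<delta> \<Longrightarrow> dist (inv P y) (inv P x) < r"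
    using has_real_derivative_inv_P[THEN DERIV_isCont, of x] r(1) unfolding continuous_at_eps_delta by blast
  define d where "d = min \<rho> \<delta>"
  have "d > 0" using \<rho>(1) \<delta>(1) by (simp add: d_def)
  moreover have "G holomorphic_on ball (complex_of_real x) d"
    by (rule holomorphic_on_subset[OF G(1)]) (use \<rho> in \<open>auto simp: d_def\<close>)
  moreover have "G (of_real y) = of_real (inv P y)" if "\<bar>y - x\<bar> < d" for y
  proof -
    have "complex_of_real (inv P y) \<in> ball \<xi> r"
      using \<delta>(2)[of y] that unfolding \<xi>_def d_def by (simp add: dist_norm dist_real_def flip: of_real_diff)
    from G(2)[OF this] show ?thesis by (simp add: Pc_real P_inv_P)
  qed
  ultimately show ?thesis by blast
qed

lemma real_analytic_V: "real_analytic V"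
proof (rule real_analyticI_holomorphic_extension)
  fix x
  obtain d G where "d > 0" "G holomorphic_on ball (complex_of_real x) d"
    and ext: "\<And>y. \<bar>y - x\<bar> < d \<Longrightarrow> G (of_real y) = of_real (inv P y)"
    using inv_P_holomorphic_extension by blast
  moreover have "(\<lambda>z. (G z)^2) holomorphic_on ball (complex_of_real x) d"
    using calculation(2) by (intro holomorphic_intros)
  ultimately show "\<exists>d>0. \<exists>H. H holomorphic_on ball (complex_of_real x) d \<and>
      (\<forall>y. \<bar>y - x\<bar> < d \<longrightarrow> H (of_real y) = of_real (V y))"
    by (intro exI[of _ d] conjI exI[of _ "\<lambda>z. (G z)^2"]) (simp_all add: V_def)
qed

lemma UM_V: "UM V"
proof -
  have "\<forall>y. V y \<ge> 0" "V 0 = 0" by (simp_all add: V_def inv_P_0)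
  then show ?thesis
    unfolding UM_def using real_analytic_V deriv_V_sign V_at_top V_at_bot by blast
qed

lemma Vinv_V: "\<theta> \<ge> 0 \<Longrightarrow> Vinv V \<theta> = P (sqrt \<theta>)"
  unfolding Vinv_def
proof (rule the_equality)
  assume "\<theta> \<ge> 0"
  then show "0 \<le> P (sqrt \<theta>) \<and> V (P (sqrt \<theta>)) = \<theta>"
    using strict_mono_P[THEN strict_mono_leD, of 0 "sqrt \<theta>"] by (simp add: P_0 V_P)
  fix y assume y: "0 \<le> y \<and> V y = \<theta>"
  then have "inv P y \<ge> 0" using strict_mono_inv_P[THEN strict_mono_leD, of 0 y] by (simp add: inv_P_0)
  then have "inv P y = sqrt \<theta>" using y unfolding V_def by auto
  then show "y = P (sqrt \<theta>)" using P_inv_P[of y] by simp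
qed

lemma V_le_on_interval: "\<theta> \<ge> 0 \<Longrightarrow> 0 \<le> y \<Longrightarrow> y \<le> P (sqrt \<theta>) \<Longrightarrow> V y \<le> \<theta>"
proof -
  assume "\<theta> \<ge> 0" "0 \<le> y" "y \<le> P (sqrt \<theta>)"
  then have "0 \<le> inv P y" "inv P y \<le> sqrt \<theta>"
    using strict_mono_leD[OF strict_mono_inv_P] by (metis inv_P_0 inv_P_P)+
  then show "V y \<le> \<theta>" unfolding V_def using \<open>\<theta> \<ge> 0\<close> by (metis power_mono real_sqrt_pow2)
qed

lemma borel_measurable_V [measurable]: "V \<in> borel_measurable borel"
  using has_real_derivative_V
  by (intro borel_measurable_continuous_onI) (meson DERIV_isCont continuous_at_imp_continuous_on)

text \<open>The substitution \<open>y = P (\<surd>\<theta> sin t)\<close> turns \<open>\<theta> - V y\<close> into \<open>\<theta> cos\<^sup>2 t\<close>, removing the singularity.\<close>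
lemma substituted_integrand:
  assumes "\<theta> > 0" "0 \<le> t" "t < pi/2"
  shows "1 / (sqrt 2 * sqrt (\<theta> - V (P (sqrt \<theta> * sin t)))) * (P' (sqrt \<theta> * sin t) * (sqrt \<theta> * cos t))
         = P' (sqrt \<theta> * sin t) / sqrt 2"
proof -
  have "cos t > 0" using assms by (intro cos_gt_zero_pi) auto
  have "\<theta> - V (P (sqrt \<theta> * sin t)) = \<theta> * (cos t)^2"
    using assms(1) by (simp add: V_P power_mult_distrib cos_squared_eq algebra_simps)
  then have "sqrt (\<theta> - V (P (sqrt \<theta> * sin t))) = sqrt \<theta> * cos t"
    using \<open>cos t > 0\<close> assms(1) by (simp add: real_sqrt_mult)
  then show ?thesis using \<open>cos t > 0\<close> assms(1) by (simp add: field_simps)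
qed

lemma has_integral_P'_sin:
  assumes "\<theta> \<ge> 0"
  shows "((\<lambda>t. P' (sqrt \<theta> * sin t) / sqrt 2) has_integral
           pi / (2 * sqrt 2) * (c1 + 3/2 * c3 * \<theta> + 15/8 * c5 * \<theta>^2)) {0..pi/2}"
proof -
  have sqrt_pow2: "sqrt \<theta> ^ 2 = \<theta>" using assms by simp
  have "sqrt \<theta> ^ 4 = (sqrt \<theta> ^ 2)^2" by (simp flip: power_mult)
  then have sqrt_pow: "sqrt \<theta> ^ 2 = \<theta>" "sqrt \<theta> ^ 4 = \<theta>^2" using sqrt_pow2 by simp_all
  have "P' (sqrt \<theta> * sin t) / sqrt 2 =
      c1 / sqrt 2 + (3 * c3 * \<theta> / sqrt 2) * sin t ^ 2 + (5 * c5 * \<theta>^2 / sqrt 2) * sin t ^ 4" for t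
    unfolding P'_def by (simp add: power_mult_distrib sqrt_pow add_divide_distrib)
  moreover have "c1 / sqrt 2 * pi / 2 + (3 * c3 * \<theta> / sqrt 2) * pi / 4 + (5 * c5 * \<theta>^2 / sqrt 2) * 3 * pi / 16
      = pi / (2 * sqrt 2) * (c1 + 3/2 * c3 * \<theta> + 15/8 * c5 * \<theta>^2)"
    by (simp add: field_simps)
  ultimately show ?thesis
    using has_integral_quartic_sin[of "c1 / sqrt 2" "3 * c3 * \<theta> / sqrt 2" "5 * c5 * \<theta>^2 / sqrt 2"] by simp
qed

lemma a_fun_V:
  assumes \<theta>: "\<theta> > 0"
  shows "a_fun V \<theta> = pi / (2 * sqrt 2) * (c1 + 3/2 * c3 * \<theta> + 15/8 * c5 * \<theta>^2)" (is "_ = ?I")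
proof -
  define f where "f y = 1 / (sqrt 2 * sqrt (\<theta> - V y))" for y
  define g where "g t = P (sqrt \<theta> * sin t)" for t
  define g' where "g' t = P' (sqrt \<theta> * sin t) * (sqrt \<theta> * cos t)" for t
  have [measurable]: "f \<in> borel_measurable borel" unfolding f_def by measurable
  have g_ends: "g 0 = 0" "g (pi/2) = P (sqrt \<theta>)" unfolding g_def by (simp_all add: P_0)
  have "a_fun V \<theta> = (LINT y|lborel. indicator {g 0..g (pi/2)} y *\<^sub>R f y)"
    unfolding a_fun_def Vinv_V[OF less_imp_le[OF \<theta>]] set_lebesgue_integral_def g_ends f_def ..
  also have "\<dots> = enn2real (\<integral>\<^sup>+y. ennreal (f y * indicator {g 0..g (pi/2)} y) \<partial>lborel)"
  proof (subst integral_eq_nn_integral)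
    show "AE y in lborel. 0 \<le> indicator {g 0..g (pi/2)} y *\<^sub>R f y"
      using V_le_on_interval[of \<theta>] \<theta> by (intro AE_I2) (auto simp: g_ends f_def indicator_def)
  qed (auto simp: mult.commute)
  also have "(\<integral>\<^sup>+y. ennreal (f y * indicator {g 0..g (pi/2)} y) \<partial>lborel) =
      (\<integral>\<^sup>+t. ennreal (f (g t) * g' t * indicator {0..pi/2} t) \<partial>lborel)"
  proof (rule nn_integral_substitution)
    show "(g has_real_derivative g' t) (at t)" for t
      unfolding g_def g'_def by (auto intro!: derivative_eq_intros DERIV_chain2[OF has_real_derivative_P])
    show "0 \<le> g' t" if "t \<in> {0..pi/2}" for t
      using that P'_pos[of "sqrt \<theta> * sin t"] \<theta> cos_ge_zero[of t] unfolding g'_def by simp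
    show "continuous_on {0..pi/2} g'"
      unfolding g'_def P'_def by (intro continuous_intros)
  qed (auto simp: set_borel_measurable_def)
  also have "\<dots> = (\<integral>\<^sup>+t. ennreal (indicator {0..pi/2} t * (P' (sqrt \<theta> * sin t) / sqrt 2)) \<partial>lborel)"
    using AE_lborel_singleton[of "pi/2"]
    by (intro nn_integral_cong_AE, eventually_elim)
      (use substituted_integrand[OF \<theta>] in \<open>auto simp: f_def g_def g'_def indicator_def\<close>)
  also have "\<dots> = ennreal ?I"
    using P'_pos has_integral_P'_sin \<theta> by (intro nn_integral_has_integral_lebesgue) (auto intro: less_imp_le)
  finally show ?thesis
    using has_integral_nonneg[OF has_integral_P'_sin[of \<theta>]] P'_pos \<theta> by (simp add: less_imp_le)
qed

end

lemma odd_quintic_without_cubic_term: "c1 > 0 \<Longrightarrow> c5 \<ge> 0 \<Longrightarrow> odd_quintic c1 0 c5"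
  by unfold_locales (intro exI[of _ c1], simp)

lemma odd_quintic_reflected: "E^2 < 2 * \<alpha> \<Longrightarrow> odd_quintic (\<alpha> + E^2) (-4*E/3) (8/15)"
proof unfold_locales
  assume "E^2 < 2 * \<alpha>"
  have "\<alpha> + E^2 + 3 * (-4*E/3) * u^2 + 5 * (8/15) * u^4 = 8/3 * (u^2 - 3*E/4)^2 + (\<alpha> - E^2/2)" for u
    by (simp add: power2_eq_square power4_eq_xxxx algebra_simps)
  then show "\<exists>m>0. \<forall>u. m \<le> \<alpha> + E^2 + 3 * (-4*E/3) * u^2 + 5 * (8/15) * u^4"
    using \<open>E^2 < 2 * \<alpha>\<close> by (intro exI[of _ "\<alpha> - E^2/2"]) auto
qed

theorem mainTheorem19:
  fixes E :: real
  assumes "E > 0"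
  shows "\<exists>V1 V2. UM V1 \<and> UM V2 \<and> even_fun V1 \<and> even_fun V2 \<and>
           \<not> quadratic_fun V1 \<and> \<not> quadratic_fun V2 \<and>
           deg0 V1 = 2 \<and> deg0 V2 = 2 \<and>
           (\<forall>\<theta>\<in>{0<..<E}. a_fun V1 \<theta> = b_fun V2 E \<theta>) \<and>
           sqrt ((deriv ^^ 2) V2 0 / (deriv ^^ 2) V1 0) \<notin> \<rat>"
proof -
  define \<alpha> where "\<alpha> = sqrt 2 * E^2"
  have "E^2 > 0" using assms by simp
  then have "\<alpha> > 0" "E^2 < 2 * \<alpha>"
    unfolding \<alpha>_def by (simp, smt (verit) mult_less_cancel_right2 real_sqrt_gt_1_iff)
  interpret V1: odd_quintic \<alpha> 0 "8/15" using \<open>\<alpha> > 0\<close> by (rule odd_quintic_without_cubic_term) simp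
  interpret V2: odd_quintic "\<alpha> + E^2" "-4*E/3" "8/15" using \<open>E^2 < 2 * \<alpha>\<close> by (rule odd_quintic_reflected)
  have "a_fun V1.V \<theta> = b_fun V2.V E \<theta>" if "\<theta> \<in> {0<..<E}" for \<theta>
    using that V1.a_fun_V[of \<theta>] V2.a_fun_V[of "E - \<theta>"]
    by (simp add: b_fun_eq_a_fun power2_eq_square algebra_simps)
  moreover have "sqrt ((deriv ^^ 2) V2.V 0 / (deriv ^^ 2) V1.V 0) = \<alpha> / (\<alpha> + E^2)"
    unfolding V1.deriv2_V_0 V2.deriv2_V_0 using \<open>\<alpha> > 0\<close> \<open>E^2 > 0\<close>
    by (intro sqrt_quotient_inverse_squares; linarith)
  moreover have "\<alpha> / (\<alpha> + E^2) = 2 - sqrt 2"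
    unfolding \<alpha>_def using \<open>E^2 > 0\<close> by (rule sqrt_2_scaled_ratio)
  ultimately show ?thesis
    using two_minus_sqrt_2_irrational unfolding even_fun_def
    by (intro exI[of _ V1.V] exI[of _ V2.V] conjI allI ballI V1.UM_V V2.UM_V V1.V_even V2.V_even
        V1.deg0_V V2.deg0_V V1.not_quadratic_V V2.not_quadratic_V) auto
qed

end
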